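(* Let $\bm{A}=[\bm{A}_1\ \bm{A}_2]\in\mathbb{R}^{m\times(n_1+n_2)}$ have full column rank with $\bm{A}_j^\top\bm{A}_j=\bm{I}_j$, $\bm{C}:=\bm{A}_2^\top\bm{A}_1\ne0$, and suppose $r:=\operatorname{rank}(\bm{C})<\min\{n_1,n_2\}$. Let $\gamma_1^*:=\frac{2}{1+\sqrt{1-\lambda_1(\bm{C}\bm{C}^\top)}}$ and $S_{11}:=[1,\infty)\times[1,\infty)$. Then $\rho(\bm{M}(\gamma_1^*,\gamma_1^* ))=\gamma_1^*-1$ and $\min_{(\gamma_1,\gamma_2)\in S_{11}}\rho(\bm{M}(\gamma_1,\gamma_2))=\gamma_1^*-1=\dfrac{1-\sqrt{1-\lambda_1(\bm{C}\bm{C}^\top)}}{1+\sqrt{1-\lambda_1(\bm{C}\bm{C}^\top)}}.$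
   Context: $\rho$: spectral radius; $\lambda_1$: largest eigenvalue. $\bm{M}(\gamma_1,\gamma_2)=\begin{bmatrix}(1-\gamma_1)\bm{I}_1&-\gamma_1\bm{C}^\top\\-\gamma_2(1-\gamma_1)\bm{C}&(1-\gamma_2)\bm{I}_2+\gamma_1\gamma_2\bm{C}\bm{C}^\top\end{bmatrix}$, the two-block gradient descent iteration matrix with stepsizes $\gamma_1,\gamma_2$. *)

theory Defs
  imports "Jordan_Normal_Form.Spectral_Radius" "Jordan_Normal_Form.DL_Rank"
begin

definition lambda_max :: "real mat \<Rightarrow> real" where
  "lambda_max B = Max {x. eigenvalue B x}"

definition rho :: "real mat \<Rightarrow> real" where
  "rho B = spectral_radius (map_mat complex_of_real B)"

definition iterM :: "real mat \<Rightarrow> real \<Rightarrow> real \<Rightarrow> real mat" where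
  "iterM C g1 g2 =
     (let n1 = dim_col C; n2 = dim_row C in
      four_block_mat
        ((1 - g1) \<cdot>\<^sub>m 1\<^sub>m n1)                    ((- g1) \<cdot>\<^sub>m transpose_mat C)
        ((- (g2 * (1 - g1))) \<cdot>\<^sub>m C)   ((1 - g2) \<cdot>\<^sub>m 1\<^sub>m n2 + (g1 * g2) \<cdot>\<^sub>m (C * transpose_mat C)))"

end

theory Submission
  imports Defs
begin

text \<open>Eliminating the first block of an eigenvector shows that every eigenvalue \<open>\<mu>\<close> of
  \<open>M(\<gamma>\<^sub>1,\<gamma>\<^sub>2)\<close> other than \<open>0\<close> and \<open>1 - \<gamma>\<^sub>1\<close> satisfies
  \<open>(\<mu> + \<gamma>\<^sub>1 - 1)(\<mu> + \<gamma>\<^sub>2 - 1) = \<gamma>\<^sub>1\<gamma>\<^sub>2 \<lambda> \<mu>\<close> for an eigenvalue \<open>\<lambda> \<in> [0,1]\<close> of \<open>C C\<^sup>T\<close>,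
  and conversely every such root is an eigenvalue. For \<open>\<gamma>\<^sub>1 = \<gamma>\<^sub>2 = \<gamma>\<^sub>1\<^sup>*\<close> this quadratic in \<open>\<mu>\<close>
  has non-positive discriminant, because \<open>\<gamma> = \<gamma>\<^sub>1\<^sup>*\<close> solves \<open>\<gamma>\<^sup>2 \<lambda>\<^sub>1 = 4(\<gamma> - 1)\<close>; hence all
  its roots have modulus \<open>\<gamma>\<^sub>1\<^sup>* - 1\<close>. Conversely, the rank deficiency of \<open>C\<close> makes \<open>1 - \<gamma>\<^sub>1\<close>
  and \<open>1 - \<gamma>\<^sub>2\<close> eigenvalues, and when both are smaller than \<open>\<gamma>\<^sub>1\<^sup>* - 1\<close> in modulus, the
  quadratic for \<open>\<lambda> = \<lambda>\<^sub>1\<close> is non-positive at \<open>\<gamma>\<^sub>1\<^sup>* - 1\<close> and so has a real root beyond it.\<close>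

lemma smult_mat_mult_vec:
  "A \<in> carrier_mat nr nc \<Longrightarrow> v \<in> carrier_vec nc \<Longrightarrow> (k \<cdot>\<^sub>m A) *\<^sub>v v = k \<cdot>\<^sub>v (A *\<^sub>v v)"
  by (rule eq_vecI) (auto simp: scalar_prod_def sum_distrib_left ac_simps)

lemma smult_append_vec: "k \<cdot>\<^sub>v (x @\<^sub>v y) = (k \<cdot>\<^sub>v x) @\<^sub>v (k \<cdot>\<^sub>v y)"
  by (rule eq_vecI) auto

lemma zero_append_zero_vec: "0\<^sub>v n1 @\<^sub>v 0\<^sub>v n2 = 0\<^sub>v (n1 + n2)"
  by (rule eq_vecI) auto

lemma smult_zero_vec: "(k :: 'a::mult_zero) \<cdot>\<^sub>v 0\<^sub>v n = 0\<^sub>v n"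
  by (rule eq_vecI) auto

lemma mult_mat_zero_vec: "A \<in> carrier_mat nr nc \<Longrightarrow> A *\<^sub>v 0\<^sub>v nc = 0\<^sub>v nr"
  by (rule eq_vecI) auto

lemma smult_vec_eq_zero_iff:
  fixes v :: "'a::field vec"
  assumes v: "v \<in> carrier_vec n"
  shows "k \<cdot>\<^sub>v v = 0\<^sub>v n \<longleftrightarrow> k = 0 \<or> v = 0\<^sub>v n"
proof (intro iffI)
  assume kv: "k \<cdot>\<^sub>v v = 0\<^sub>v n"
  have "k * v $ i = 0" if "i < n" for i
    using arg_cong[OF kv, of "\<lambda>w. w $ i"] that v by simp
  then show "k = 0 \<or> v = 0\<^sub>v n" using v by auto
qed (use v in auto)

lemma mult_unit_vec:
  fixes A :: "'a::semiring_1 mat"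
  shows "A \<in> carrier_mat nr nc \<Longrightarrow> i < nc \<Longrightarrow> A *\<^sub>v unit_vec nc i = col A i"
  by (rule eq_vecI) auto

lemma eigenvalueI:
  assumes "A \<in> carrier_mat n n" "v \<in> carrier_vec n" "v \<noteq> 0\<^sub>v n" "A *\<^sub>v v = k \<cdot>\<^sub>v v"
  shows "eigenvalue A k"
  using assms unfolding eigenvalue_def eigenvector_def by auto

lemma eigenvalueE:
  assumes "eigenvalue A k" "A \<in> carrier_mat n n"
  obtains v where "v \<in> carrier_vec n" "v \<noteq> 0\<^sub>v n" "A *\<^sub>v v = k \<cdot>\<^sub>v v"
  using assms unfolding eigenvalue_def eigenvector_def by auto

lemma abs_le_rho_of_eigenvalue:
  fixes M :: "real mat"
  assumes M: "M \<in> carrier_mat n n" and ev: "eigenvalue M \<mu>"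
  shows "\<bar>\<mu>\<bar> \<le> rho M"
proof -
  have Mc: "map_mat complex_of_real M \<in> carrier_mat n n" using M by simp
  have "complex_of_real \<mu> \<in> spectrum (map_mat complex_of_real M)"
    using of_real_hom.eigenvalue_hom[OF M ev] unfolding spectrum_def by simp
  then have "cmod (complex_of_real \<mu>) \<le> spectral_radius (map_mat complex_of_real M)"
    using spectral_radius_mem_max(2)[OF Mc eigenvalue_imp_nonzero_dim[OF M ev]] by blast
  then show ?thesis unfolding rho_def by simp
qed

lemma rho_le_of_eigenvalues_le:
  fixes M :: "real mat"
  assumes M: "M \<in> carrier_mat n n" and n: "n > 0"
    and bound: "\<And>\<mu>. eigenvalue (map_mat complex_of_real M) \<mu> \<Longrightarrow> cmod \<mu> \<le> c"
  shows "rho M \<le> c"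
proof -
  have Mc: "map_mat complex_of_real M \<in> carrier_mat n n" using M by simp
  obtain \<mu> where "\<mu> \<in> spectrum (map_mat complex_of_real M)"
    and "spectral_radius (map_mat complex_of_real M) = cmod \<mu>"
    using spectral_radius_mem_max(1)[OF Mc n] by auto
  then show ?thesis unfolding rho_def spectrum_def using bound by auto
qed

lemma eigenvalue_map_of_real_iff:
  fixes B :: "real mat"
  assumes B: "B \<in> carrier_mat n n"
  shows "eigenvalue (map_mat complex_of_real B) (complex_of_real t) \<longleftrightarrow> eigenvalue B t"
proof -
  have "eigenvalue (map_mat complex_of_real B) (complex_of_real t)
      \<longleftrightarrow> complex_of_real (poly (char_poly B) t) = 0"
    using eigenvalue_root_char_poly[of "map_mat complex_of_real B" n] B
    by (simp add: of_real_hom.char_poly_hom[OF B] of_real_hom.poly_map_poly)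
  also have "\<dots> \<longleftrightarrow> eigenvalue B t"
    using eigenvalue_root_char_poly[OF B] by simp
  finally show ?thesis .
qed

lemma eigenvalue_lambda_max:
  fixes B :: "real mat"
  assumes B: "B \<in> carrier_mat n n" and ev: "eigenvalue B t"
  shows "eigenvalue B (lambda_max B)" and "t \<le> lambda_max B"
proof -
  have fin: "finite {x. eigenvalue B x}"
    using card_finite_spectrum(1)[OF B] unfolding spectrum_def .
  show "eigenvalue B (lambda_max B)"
    unfolding lambda_max_def using Max_in[OF fin] ev by auto
  show "t \<le> lambda_max B"
    unfolding lambda_max_def using fin ev by simp
qed

section \<open>Gram matrices\<close>

lemma map_mat_of_real_gram:
  "C \<in> carrier_mat n2 n1 \<Longrightarrow> map_mat complex_of_real (C * transpose_mat C)
    = map_mat complex_of_real C * transpose_mat (map_mat complex_of_real C)"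
  by (rule eq_matI) (auto simp: scalar_prod_def)

lemma conjugate_map_of_real_mult_vec:
  "A \<in> carrier_mat nr nc \<Longrightarrow> v \<in> carrier_vec nc \<Longrightarrow>
    conjugate (map_mat complex_of_real A *\<^sub>v v) = map_mat complex_of_real A *\<^sub>v conjugate v"
  by (rule eq_vecI) (auto simp: scalar_prod_def sum_conjugate conjugate_dist_mul)

text \<open>Hermitian argument: \<open>\<mu> \<parallel>y\<parallel>\<^sup>2 = \<parallel>C\<^sup>T y\<parallel>\<^sup>2\<close> for a complex eigenvector \<open>y\<close>.\<close>
lemma gram_complex_eigenvalue_real:
  fixes C :: "real mat"
  assumes C: "C \<in> carrier_mat n2 n1"
    and ev: "eigenvalue (map_mat complex_of_real (C * transpose_mat C)) \<mu>"
  shows "\<exists>t. \<mu> = complex_of_real t \<and> eigenvalue (C * transpose_mat C) t"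
proof -
  define Cc where "Cc = map_mat complex_of_real C"
  have Cc: "Cc \<in> carrier_mat n2 n1" and Cct: "transpose_mat Cc \<in> carrier_mat n1 n2"
    using C unfolding Cc_def by auto
  have "eigenvalue (Cc * transpose_mat Cc) \<mu>"
    using ev unfolding map_mat_of_real_gram[OF C] Cc_def .
  then obtain y where y: "y \<in> carrier_vec n2" "y \<noteq> 0\<^sub>v n2"
    and Cy: "(Cc * transpose_mat Cc) *\<^sub>v y = \<mu> \<cdot>\<^sub>v y"
    using Cc Cct by (elim eigenvalueE) auto
  define w where "w = transpose_mat Cc *\<^sub>v y"
  have w: "w \<in> carrier_vec n1" unfolding w_def using Cct y by auto
  have Cw: "Cc *\<^sub>v w = \<mu> \<cdot>\<^sub>v y"
    using Cy Cc Cct y unfolding w_def by (simp add: assoc_mult_mat_vec[of _ n2 n1 _ n2])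
  have conj_w: "conjugate w = transpose_mat Cc *\<^sub>v conjugate y"
    unfolding w_def Cc_def map_mat_transpose using C y
    by (subst conjugate_map_of_real_mult_vec[of _ n1 n2]) auto
  have "(Cc *\<^sub>v w) \<bullet> conjugate y = conjugate y \<bullet> (Cc *\<^sub>v w)"
    using Cc w y by (subst comm_scalar_prod[of _ n2]) auto
  also have "\<dots> = conjugate w \<bullet> w"
    using transpose_vec_mult_scalar[OF Cc w, of "conjugate y"] y by (simp add: conj_w)
  also have "\<dots> = w \<bullet>c w" using conjugate_vec_sprod_comm[OF w w] by simp
  finally have rayleigh: "\<mu> * (y \<bullet>c y) = w \<bullet>c w" using Cw y by simp
  define p where "p = Re (y \<bullet>c y)"
  define q where "q = Re (w \<bullet>c w)"
  have "y \<bullet>c y > 0" using y by simp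
  then have "y \<bullet>c y = complex_of_real p" "p > 0"
    unfolding p_def by (auto simp: less_complex_def complex_eq_iff)
  moreover have "w \<bullet>c w = complex_of_real q"
    unfolding q_def using conjugate_square_ge_0_vec[of w]
    by (auto simp: less_eq_complex_def complex_eq_iff)
  ultimately have \<mu>: "\<mu> = complex_of_real (q / p)" using rayleigh by (simp add: field_simps)
  moreover have "eigenvalue (C * transpose_mat C) (q / p)"
    using ev C unfolding \<mu> by (subst (asm) eigenvalue_map_of_real_iff[of _ n2]) auto
  ultimately show ?thesis by blast
qed

lemma gram_has_eigenvalue:
  fixes C :: "real mat"
  assumes C: "C \<in> carrier_mat n2 n1" and n2: "n2 > 0"
  obtains t where "eigenvalue (C * transpose_mat C) t"
proof -
  have "map_mat complex_of_real (C * transpose_mat C) \<in> carrier_mat n2 n2" using C by simp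
  from spectrum_non_empty[OF this n2] obtain \<mu>
    where "eigenvalue (map_mat complex_of_real (C * transpose_mat C)) \<mu>"
    unfolding spectrum_def by auto
  with gram_complex_eigenvalue_real[OF C] that show ?thesis by blast
qed

lemma gram_eigenvalue_rayleigh:
  fixes C :: "real mat"
  assumes C: "C \<in> carrier_mat n2 n1" and u: "u \<in> carrier_vec n2"
    and Cu: "(C * transpose_mat C) *\<^sub>v u = t \<cdot>\<^sub>v u"
  shows "t * (u \<bullet> u) = (transpose_mat C *\<^sub>v u) \<bullet> (transpose_mat C *\<^sub>v u)"
proof -
  have Ct: "transpose_mat C \<in> carrier_mat n1 n2" using C by auto
  have "t * (u \<bullet> u) = u \<bullet> ((C * transpose_mat C) *\<^sub>v u)"
    using u by (simp add: Cu)
  also have "\<dots> = u \<bullet> (C *\<^sub>v (transpose_mat C *\<^sub>v u))"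
    using C Ct u by (simp add: assoc_mult_mat_vec[of _ n2 n1 _ n2])
  also have "\<dots> = (transpose_mat C *\<^sub>v u) \<bullet> (transpose_mat C *\<^sub>v u)"
    using transpose_vec_mult_scalar[OF C _ u, of "transpose_mat C *\<^sub>v u"] Ct u by simp
  finally show ?thesis .
qed

lemma gram_eigenvalue_nonneg:
  fixes C :: "real mat"
  assumes C: "C \<in> carrier_mat n2 n1" and ev: "eigenvalue (C * transpose_mat C) t"
  shows "0 \<le> t"
proof -
  obtain u where u: "u \<in> carrier_vec n2" "u \<noteq> 0\<^sub>v n2"
    and Cu: "(C * transpose_mat C) *\<^sub>v u = t \<cdot>\<^sub>v u"
    using eigenvalueE[OF ev] C by (metis mult_carrier_mat transpose_carrier_mat)
  have "0 \<le> t * (u \<bullet> u)"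
    unfolding gram_eigenvalue_rayleigh[OF C u(1) Cu]
    using conjugate_square_ge_0_vec[of "transpose_mat C *\<^sub>v u"] by simp
  moreover have "u \<bullet> u > 0" using u conjugate_square_greater_0_vec[of u n2] by simp
  ultimately show ?thesis by (simp add: zero_le_mult_iff)
qed

lemma orthonormal_transpose_mult_vec_sprod_le:
  fixes A :: "real mat"
  assumes A: "A \<in> carrier_mat m n" and orth: "transpose_mat A * A = 1\<^sub>m n"
    and w: "w \<in> carrier_vec m"
  shows "(transpose_mat A *\<^sub>v w) \<bullet> (transpose_mat A *\<^sub>v w) \<le> w \<bullet> w"
proof -
  define q where "q = transpose_mat A *\<^sub>v w"
  define p where "p = A *\<^sub>v q"
  have q: "q \<in> carrier_vec n" and p: "p \<in> carrier_vec m"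
    using A w unfolding q_def p_def by auto
  have wp: "w \<bullet> p = q \<bullet> q"
    unfolding p_def q_def using transpose_vec_mult_scalar[OF A _ w, of q] A w q q_def by auto
  have "transpose_mat A *\<^sub>v p = q"
    unfolding p_def using A q by (simp add: assoc_mult_mat_vec[of _ n m _ n, symmetric] orth)
  then have pp: "p \<bullet> p = q \<bullet> q"
    using transpose_vec_mult_scalar[OF A q p] unfolding p_def by simp
  have "0 \<le> (w - p) \<bullet> (w - p)"
    using conjugate_square_ge_0_vec[of "w - p"] by simp
  also have "\<dots> = w \<bullet> w - w \<bullet> p - (p \<bullet> w - p \<bullet> p)"
    using w p by (simp add: minus_scalar_prod_distrib[of _ m] scalar_prod_minus_distrib[of _ m])
  finally show ?thesis using wp pp comm_scalar_prod[OF p w] q_def by simp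
qed

text \<open>\<open>\<parallel>C\<^sup>T u\<parallel> = \<parallel>A\<^sub>1\<^sup>T (A\<^sub>2 u)\<parallel> \<le> \<parallel>A\<^sub>2 u\<parallel> = \<parallel>u\<parallel>\<close>,
  as \<open>A\<^sub>1\<^sup>T\<close> is a contraction and \<open>A\<^sub>2\<close> an isometry.\<close>
lemma gram_eigenvalue_le_one:
  fixes A1 A2 C :: "real mat"
  assumes A1: "A1 \<in> carrier_mat m n1" and A2: "A2 \<in> carrier_mat m n2"
    and orth1: "transpose_mat A1 * A1 = 1\<^sub>m n1" and orth2: "transpose_mat A2 * A2 = 1\<^sub>m n2"
    and C_def: "C = transpose_mat A2 * A1"
    and ev: "eigenvalue (C * transpose_mat C) t"
  shows "t \<le> 1"
proof -
  have C: "C \<in> carrier_mat n2 n1" using A1 A2 C_def by auto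
  obtain u where u: "u \<in> carrier_vec n2" "u \<noteq> 0\<^sub>v n2"
    and Cu: "(C * transpose_mat C) *\<^sub>v u = t \<cdot>\<^sub>v u"
    using eigenvalueE[OF ev] C by (metis mult_carrier_mat transpose_carrier_mat)
  have "transpose_mat C = transpose_mat A1 * A2"
    using A1 A2 C_def by (simp add: transpose_mult[of _ n2 m _ n1])
  then have Ctu: "transpose_mat C *\<^sub>v u = transpose_mat A1 *\<^sub>v (A2 *\<^sub>v u)"
    using A1 A2 u by (simp add: assoc_mult_mat_vec[of _ n1 m _ n2])
  have "(A2 *\<^sub>v u) \<bullet> (A2 *\<^sub>v u) = (transpose_mat A2 *\<^sub>v (A2 *\<^sub>v u)) \<bullet> u"
    using transpose_vec_mult_scalar[OF A2 u(1), of "A2 *\<^sub>v u"] A2 u by simp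
  also have "transpose_mat A2 *\<^sub>v (A2 *\<^sub>v u) = u"
    using A2 u by (simp add: assoc_mult_mat_vec[of _ n2 m _ n2, symmetric] orth2)
  finally have "(A2 *\<^sub>v u) \<bullet> (A2 *\<^sub>v u) = u \<bullet> u" .
  then have "t * (u \<bullet> u) \<le> 1 * (u \<bullet> u)"
    using gram_eigenvalue_rayleigh[OF C u(1) Cu] A2 u
      orthonormal_transpose_mult_vec_sprod_le[OF A1 orth1, of "A2 *\<^sub>v u"]
    by (simp add: Ctu)
  moreover have "u \<bullet> u > 0" using u conjugate_square_greater_0_vec[of u n2] by simp
  ultimately show ?thesis by simp
qed

lemma (in vec_space) rank_mult_le:
  assumes A: "A \<in> carrier_mat n nc" and B: "B \<in> carrier_mat nc k"
  shows "rank (A * B) \<le> rank A"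
proof -
  define W where "W = span (set (cols A))"
  have AB: "A * B \<in> carrier_mat n k" using A B by auto
  have "set (cols (A * B)) \<subseteq> W"
  proof
    fix x assume "x \<in> set (cols (A * B))"
    then obtain j where j: "j < k" "x = col (A * B) j" using AB
      by (metis cols_length cols_nth in_set_conv_nth carrier_matD(2))
    have "x = A *\<^sub>v col B j" unfolding j(2) by (rule col_mult2[OF A B j(1)])
    moreover have "col B j \<in> carrier_vec nc" using B j by auto
    ultimately have "x \<in> col_space A" unfolding col_space_eq[OF A] using A by auto
    then show "x \<in> W" unfolding W_def col_space_def .
  qed
  have WV: "subspace class_ring W V"
    unfolding W_def using A by (metis cols_dim carrier_matD(1) span_is_subspace)
  then have "span (set (cols (A * B))) \<subseteq> W"
    by (simp add: \<open>set (cols (A * B)) \<subseteq> W\<close> span_is_subset)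
  have "subspace class_ring (span (set (cols (A * B)))) V"
    by (metis AB cols_dim carrier_matD(1) span_is_subspace)
  have subspace: "subspace class_ring (span (set (cols (A * B)))) (vs W)"
    using nested_subspaces[OF WV \<open>subspace class_ring (span (set (cols (A * B)))) V\<close>
      \<open>span (set (cols (A * B))) \<subseteq> W\<close>] .
  have finW: "vectorspace.fin_dim class_ring (vs W)" unfolding W_def using fin_dim_span_cols[OF A] .
  have finAB: "vectorspace.fin_dim class_ring (span_vs (set (cols (A * B))))"
    using fin_dim_span_cols[OF AB] .
  show ?thesis unfolding rank_def W_def[symmetric]
    using vectorspace.subspace_dim[OF subspace_is_vs[OF WV] subspace finW] finAB by auto
qed

lemma exists_kernel_vec_of_rank_lt_ncols:
  fixes C :: "'a::field mat"
  assumes C: "C \<in> carrier_mat n2 n1" and r: "vec_space.rank n2 C < n1"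
  obtains x where "x \<in> carrier_vec n1" "x \<noteq> 0\<^sub>v n1" "C *\<^sub>v x = 0\<^sub>v n2"
proof (cases "distinct (cols C)")
  case True
  interpret vec_space "TYPE('a)" n2 .
  have "\<not> lin_indpt (set (cols C))" using lin_indpt_full_rank[OF C True] r by auto
  with lin_depE[OF C _ True] that show thesis by blast
next
  case False
  then obtain i j where ij: "i \<noteq> j" "i < n1" "j < n1" "col C i = col C j"
    using C by (auto simp: distinct_conv_nth)
  define x :: "'a vec" where "x = unit_vec n1 i - unit_vec n1 j"
  have x: "x \<in> carrier_vec n1" unfolding x_def by simp
  moreover have "x $ i = 1" unfolding x_def using ij by simp
  then have "x \<noteq> 0\<^sub>v n1" using ij by auto
  moreover have "C *\<^sub>v x = 0\<^sub>v n2"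
    unfolding x_def using C ij
    by (simp add: mult_minus_distrib_mat_vec[of _ n2 n1] mult_unit_vec)
  ultimately show thesis by (rule that)
qed

lemma exists_transpose_kernel_vec_of_rank_lt_nrows:
  fixes C :: "real mat"
  assumes C: "C \<in> carrier_mat n2 n1" and r: "vec_space.rank n2 C < n2"
  obtains y where "y \<in> carrier_vec n2" "y \<noteq> 0\<^sub>v n2" "transpose_mat C *\<^sub>v y = 0\<^sub>v n1"
proof -
  interpret vec_space "TYPE(real)" n2 .
  have Ct: "transpose_mat C \<in> carrier_mat n1 n2" and CCt: "C * transpose_mat C \<in> carrier_mat n2 n2"
    using C by auto
  have "rank (C * transpose_mat C) < n2"
    using rank_mult_le[OF C Ct] r by simp
  then have "det (C * transpose_mat C) = 0" using det_rank_iff[OF CCt] by simp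
  then obtain y where y: "y \<in> carrier_vec n2" "y \<noteq> 0\<^sub>v n2" "(C * transpose_mat C) *\<^sub>v y = 0\<^sub>v n2"
    using det_0_iff_vec_prod_zero_field[OF CCt] by auto
  then have "(C * transpose_mat C) *\<^sub>v y = 0 \<cdot>\<^sub>v y" by (simp add: smult_zero_vec)
  from gram_eigenvalue_rayleigh[OF C y(1) this]
  have "transpose_mat C *\<^sub>v y = 0\<^sub>v n1"
    using conjugate_square_eq_0_vec[of "transpose_mat C *\<^sub>v y" n1] Ct y by simp
  with y that show thesis by blast
qed

lemma cmod_root_of_quadratic_eq:
  fixes \<mu> :: complex and b c :: real
  assumes c: "c \<ge> 0" and bb: "b^2 \<le> 4 * c^2"
    and eq: "\<mu>^2 + complex_of_real b * \<mu> + complex_of_real (c^2) = 0"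
  shows "cmod \<mu> = c"
proof -
  define p where "p = Re \<mu>"
  define q where "q = Im \<mu>"
  have re: "p^2 - q^2 + b * p + c^2 = 0"
    using arg_cong[OF eq, of Re] unfolding p_def q_def by (simp add: power2_eq_square)
  have im: "2 * p * q + b * q = 0"
    using arg_cong[OF eq, of Im] unfolding p_def q_def by (simp add: power2_eq_square algebra_simps)
  have "p^2 + q^2 = c^2"
  proof (cases "q = 0")
    case False
    have "q * (2*p + b) = 0" using im by (simp add: algebra_simps)
    then have b: "b = - 2 * p" using False by simp
    have "p^2 - q^2 + (- 2 * p) * p + c^2 = 0" using re unfolding b .
    then show ?thesis by (simp add: power2_eq_square algebra_simps)
  next
    case True
    with re have "(p + b/2)^2 = b^2/4 - c^2" by (simp add: power2_eq_square field_simps)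
    moreover have "(p + b/2)^2 \<ge> 0" by simp
    ultimately have "(p + b/2)^2 = 0" "b^2 = 4 * c^2" using bb by auto
    then have "b = - 2 * p" by simp
    with \<open>b^2 = 4*c^2\<close> have "4 * p^2 = 4 * c^2" by (simp add: power2_eq_square)
    with True show ?thesis by simp
  qed
  then show ?thesis unfolding cmod_def p_def q_def using c by (simp add: real_sqrt_unique)
qed

lemma quadratic_root_ge:
  fixes b d c :: real
  assumes "c^2 + b * c + d \<le> 0"
  obtains \<mu> where "c \<le> \<mu>" "\<mu>^2 + b * \<mu> + d = 0"
proof -
  have "(2 * c + b)^2 = b^2 - 4 * d + 4 * (c^2 + b * c + d)"
    by (simp add: power2_eq_square algebra_simps)
  also have "\<dots> \<le> b^2 - 4 * d" using assms by simp
  finally have bound: "(2 * c + b)^2 \<le> b^2 - 4 * d" .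
  then have disc: "0 \<le> b^2 - 4 * d" by (metis zero_le_power2 order_trans)
  define \<mu> where "\<mu> = (- b + sqrt (b^2 - 4 * d)) / 2"
  have "\<bar>2 * c + b\<bar> \<le> sqrt (b^2 - 4 * d)"
    using real_sqrt_le_mono[OF bound] by simp
  then have "c \<le> \<mu>" unfolding \<mu>_def by (simp add: field_simps abs_le_iff)
  moreover have "\<mu>^2 + b * \<mu> + d = 0"
    using disc unfolding \<mu>_def by (simp add: power2_eq_square field_simps)
  ultimately show thesis by (rule that)
qed

lemma optimal_rate_identities:
  fixes s :: real
  assumes "0 \<le> s" "s \<le> 1"
  defines "c \<equiv> (1 - sqrt (1 - s)) / (1 + sqrt (1 - s))"
  shows "0 \<le> c" "c \<le> 1" "s * (1 + c)^2 = 4 * c" "2 / (1 + sqrt (1 - s)) - 1 = c"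
proof -
  define r where "r = sqrt (1 - s)"
  have r: "0 \<le> r" "r \<le> 1" "s = 1 - r^2" unfolding r_def using assms(1,2) by auto
  have c_def': "c = (1 - r) / (1 + r)" unfolding c_def r_def ..
  show "0 \<le> c" "c \<le> 1" unfolding c_def' using r by auto
  show "2 / (1 + sqrt (1 - s)) - 1 = c" unfolding c_def' r_def[symmetric] using r
    by (simp add: field_simps)
  have "1 + c = 2 / (1 + r)" unfolding c_def' using r by (simp add: field_simps)
  then have "s * (1 + c)^2 = ((1 - r) * 4 * (1 + r)) / ((1 + r) * (1 + r))"
    unfolding r(3) by (simp add: power_divide power2_eq_square algebra_simps)
  also have "\<dots> = 4 * c"
    unfolding c_def' using r by (subst mult_divide_mult_cancel_right) auto
  finally show "s * (1 + c)^2 = 4 * c" .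
qed

lemma char_relation_le_at_rate:
  fixes c s g1 g2 :: real
  assumes c: "0 \<le> c" "c \<le> 1" and hs: "s * (1 + c)^2 = 4 * c"
    and g1: "1 \<le> g1" "g1 \<le> 1 + c" and g2: "1 \<le> g2" "g2 \<le> 1 + c"
  shows "(c + g1 - 1) * (c + g2 - 1) \<le> g1 * g2 * s * c"
proof -
  have factor: "(c + g - 1) * (1 + c) \<le> 2 * c * g" if "1 \<le> g" "g \<le> 1 + c" for g
  proof -
    have "0 \<le> (1 - c) * (1 + c - g)" using c that by simp
    also have "\<dots> = 2 * c * g - (c + g - 1) * (1 + c)" by (simp add: algebra_simps)
    finally show ?thesis by simp
  qed
  have "(c + g1 - 1) * (c + g2 - 1) * (1 + c)^2 = ((c + g1 - 1) * (1 + c)) * ((c + g2 - 1) * (1 + c))"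
    by (simp add: power2_eq_square algebra_simps)
  also have "\<dots> \<le> (2 * c * g1) * (2 * c * g2)"
    by (rule mult_mono[OF factor[OF g1] factor[OF g2]]) (use c g1 g2 in simp_all)
  also have "\<dots> = g1 * g2 * c * (s * (1 + c)^2)" unfolding hs by (simp add: algebra_simps)
  finally have "(c + g1 - 1) * (c + g2 - 1) * (1 + c)^2 \<le> (g1 * g2 * s * c) * (1 + c)^2"
    by (simp add: algebra_simps)
  moreover have "0 < (1 + c)^2" using c by simp
  ultimately show ?thesis by (rule mult_right_le_imp_le)
qed

section \<open>The eigenvalues of the iteration matrix\<close>

text \<open>The iteration matrix over an arbitrary field, so that it can be complexified.\<close>
definition gd_iter_mat :: "'a::field mat \<Rightarrow> 'a \<Rightarrow> 'a \<Rightarrow> 'a mat" where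
  "gd_iter_mat C g1 g2 =
     (let n1 = dim_col C; n2 = dim_row C in
      four_block_mat
        ((1 - g1) \<cdot>\<^sub>m 1\<^sub>m n1)                    ((- g1) \<cdot>\<^sub>m transpose_mat C)
        ((- (g2 * (1 - g1))) \<cdot>\<^sub>m C)   ((1 - g2) \<cdot>\<^sub>m 1\<^sub>m n2 + (g1 * g2) \<cdot>\<^sub>m (C * transpose_mat C)))"

lemma iterM_eq_gd_iter_mat: "iterM C g1 g2 = gd_iter_mat C g1 g2"
  unfolding iterM_def gd_iter_mat_def by simp

lemma gd_iter_mat_carrier:
  "C \<in> carrier_mat n2 n1 \<Longrightarrow> gd_iter_mat C g1 g2 \<in> carrier_mat (n1 + n2) (n1 + n2)"
  unfolding gd_iter_mat_def Let_def by (auto intro!: four_block_carrier_mat)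

lemma map_mat_of_real_gd_iter_mat:
  assumes C: "C \<in> carrier_mat n2 n1"
  shows "map_mat complex_of_real (gd_iter_mat C g1 g2)
    = gd_iter_mat (map_mat complex_of_real C) (of_real g1) (of_real g2)"
  unfolding gd_iter_mat_def Let_def using C
  apply (subst map_four_block_mat[of _ n1 n1 _ n2 _ n2], auto)
  apply (rule cong_four_block_mat)
     apply (rule eq_matI, auto simp: scalar_prod_def)+
  done

lemma gd_iter_mat_mult_append:
  fixes C :: "'a::field mat"
  assumes C: "C \<in> carrier_mat n2 n1" and x: "x \<in> carrier_vec n1" and y: "y \<in> carrier_vec n2"
  shows "gd_iter_mat C g1 g2 *\<^sub>v (x @\<^sub>v y) =
    ((1 - g1) \<cdot>\<^sub>v x + (- g1) \<cdot>\<^sub>v (transpose_mat C *\<^sub>v y)) @\<^sub>v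
    ((- (g2 * (1 - g1))) \<cdot>\<^sub>v (C *\<^sub>v x) + (1 - g2) \<cdot>\<^sub>v y
      + (g1 * g2) \<cdot>\<^sub>v (C *\<^sub>v (transpose_mat C *\<^sub>v y)))"
proof -
  have Ct: "transpose_mat C \<in> carrier_mat n1 n2" and CCt: "C * transpose_mat C \<in> carrier_mat n2 n2"
    using C by auto
  have "gd_iter_mat C g1 g2 *\<^sub>v (x @\<^sub>v y)
   = (((1 - g1) \<cdot>\<^sub>m 1\<^sub>m n1) *\<^sub>v x + ((- g1) \<cdot>\<^sub>m transpose_mat C) *\<^sub>v y) @\<^sub>v
     (((- (g2 * (1 - g1))) \<cdot>\<^sub>m C) *\<^sub>v x
       + ((1 - g2) \<cdot>\<^sub>m 1\<^sub>m n2 + (g1 * g2) \<cdot>\<^sub>m (C * transpose_mat C)) *\<^sub>v y)"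
    unfolding gd_iter_mat_def Let_def using C Ct CCt x y
    by (simp add: four_block_mat_mult_vec[of _ n1 n1 _ n2 _ n2])
  with C Ct CCt x y show ?thesis
    by (simp add: smult_mat_mult_vec[of _ n1 n1] smult_mat_mult_vec[of _ n1 n2]
        smult_mat_mult_vec[of _ n2 n1] smult_mat_mult_vec[of _ n2 n2]
        add_mult_distrib_mat_vec[of _ n2 n2] assoc_mult_mat_vec[of _ n2 n1 _ n2] assoc_add_vec[of _ n2])
qed

lemma gd_iter_mat_eigenvalue_of_kernel:
  fixes C :: "'a::field mat"
  assumes C: "C \<in> carrier_mat n2 n1"
    and x: "x \<in> carrier_vec n1" "x \<noteq> 0\<^sub>v n1" and Cx: "C *\<^sub>v x = 0\<^sub>v n2"
  shows "eigenvalue (gd_iter_mat C g1 g2) (1 - g1)"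
proof -
  have "gd_iter_mat C g1 g2 *\<^sub>v (x @\<^sub>v 0\<^sub>v n2) = (1 - g1) \<cdot>\<^sub>v (x @\<^sub>v 0\<^sub>v n2)"
    using C x Cx by (simp add: gd_iter_mat_mult_append smult_append_vec smult_zero_vec mult_mat_zero_vec[of _ n1 n2] mult_mat_zero_vec[of _ n2 n1])
  moreover have "x @\<^sub>v 0\<^sub>v n2 \<noteq> 0\<^sub>v (n1 + n2)"
    using x by (simp flip: zero_append_zero_vec)
  ultimately show ?thesis
    using x by (intro eigenvalueI[OF gd_iter_mat_carrier[OF C]]) auto
qed

lemma gd_iter_mat_eigenvalue_of_transpose_kernel:
  fixes C :: "'a::field mat"
  assumes C: "C \<in> carrier_mat n2 n1"
    and y: "y \<in> carrier_vec n2" "y \<noteq> 0\<^sub>v n2" and Cty: "transpose_mat C *\<^sub>v y = 0\<^sub>v n1"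
  shows "eigenvalue (gd_iter_mat C g1 g2) (1 - g2)"
proof -
  have "gd_iter_mat C g1 g2 *\<^sub>v (0\<^sub>v n1 @\<^sub>v y) = (1 - g2) \<cdot>\<^sub>v (0\<^sub>v n1 @\<^sub>v y)"
    using C y Cty by (simp add: gd_iter_mat_mult_append smult_append_vec smult_zero_vec mult_mat_zero_vec[of _ n1 n2] mult_mat_zero_vec[of _ n2 n1])
  moreover have "0\<^sub>v n1 @\<^sub>v y \<noteq> 0\<^sub>v (n1 + n2)"
    using y by (simp add: append_vec_eq[of "0\<^sub>v n1" n1] flip: zero_append_zero_vec)
  ultimately show ?thesis
    using y by (intro eigenvalueI[OF gd_iter_mat_carrier[OF C]]) auto
qed

lemma gd_iter_mat_eigenvalue_of_gram_eigenvalue: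
  fixes C :: "'a::field mat"
  assumes C: "C \<in> carrier_mat n2 n1" and g1: "g1 \<noteq> 0"
    and s: "eigenvalue (C * transpose_mat C) s" "s \<noteq> 0"
    and \<mu>: "(\<mu> + g1 - 1) * (\<mu> + g2 - 1) = g1 * g2 * s * \<mu>"
  shows "eigenvalue (gd_iter_mat C g1 g2) \<mu>"
proof -
  have Ct: "transpose_mat C \<in> carrier_mat n1 n2" using C by auto
  obtain u where u: "u \<in> carrier_vec n2" "u \<noteq> 0\<^sub>v n2"
    and Cu: "(C * transpose_mat C) *\<^sub>v u = s \<cdot>\<^sub>v u"
    using eigenvalueE[OF s(1)] C by (metis mult_carrier_mat transpose_carrier_mat)
  define w where "w = transpose_mat C *\<^sub>v u"
  have w: "w \<in> carrier_vec n1" using Ct u unfolding w_def by auto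
  have Cw: "C *\<^sub>v w = s \<cdot>\<^sub>v u"
    using Cu C Ct u unfolding w_def by (simp add: assoc_mult_mat_vec[of _ n2 n1 _ n2])
  have "w \<noteq> 0\<^sub>v n1"
  proof
    assume "w = 0\<^sub>v n1"
    then have "s \<cdot>\<^sub>v u = 0\<^sub>v n2" using Cw C by (simp add: mult_mat_zero_vec)
    then show False using u s(2) by (simp add: smult_vec_eq_zero_iff)
  qed
  define a where "a = 1 - g1 - \<mu>"
  define v where "v = (g1 \<cdot>\<^sub>v w) @\<^sub>v (a \<cdot>\<^sub>v u)"
  have "gd_iter_mat C g1 g2 *\<^sub>v v = ((1 - g1) \<cdot>\<^sub>v (g1 \<cdot>\<^sub>v w) + (- g1) \<cdot>\<^sub>v (a \<cdot>\<^sub>v w)) @\<^sub>v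
      ((- (g2 * (1 - g1))) \<cdot>\<^sub>v (g1 \<cdot>\<^sub>v (s \<cdot>\<^sub>v u)) + (1 - g2) \<cdot>\<^sub>v (a \<cdot>\<^sub>v u)
        + (g1 * g2) \<cdot>\<^sub>v (a \<cdot>\<^sub>v (s \<cdot>\<^sub>v u)))"
    unfolding v_def using C Ct u w
    by (simp add: gd_iter_mat_mult_append mult_mat_vec[of _ n1 n2] mult_mat_vec[of _ n2 n1] Cw
        flip: w_def)
  also have "\<dots> = \<mu> \<cdot>\<^sub>v v"
  proof -
    have "(\<mu> + g1 - 1) * (\<mu> + g2 - 1) * u $ i = g1 * g2 * s * \<mu> * u $ i" for i
      using \<mu> by simp
    then show ?thesis
      unfolding v_def smult_append_vec using u w
      by (intro arg_cong2[where f = append_vec] eq_vecI) (auto simp: a_def algebra_simps)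
  qed
  finally show ?thesis
    using w u \<open>w \<noteq> 0\<^sub>v n1\<close> g1 unfolding v_def
    by (intro eigenvalueI[OF gd_iter_mat_carrier[OF C]])
      (auto simp: append_vec_eq[of _ n1] smult_vec_eq_zero_iff simp flip: zero_append_zero_vec)
qed

text \<open>The first block row gives \<open>g\<^sub>1 C\<^sup>T y = (1 - g\<^sub>1 - \<mu>) x\<close>; substituting this into the
  second block row shows that \<open>y\<close> is an eigenvector of \<open>C C\<^sup>T\<close>.\<close>
lemma gram_eigenvalue_of_gd_iter_mat_eigenvalue:
  fixes C :: "'a::field mat"
  assumes C: "C \<in> carrier_mat n2 n1" and g: "g1 \<noteq> 0" "g2 \<noteq> 0"
    and ev: "eigenvalue (gd_iter_mat C g1 g2) \<mu>" and \<mu>: "\<mu> \<noteq> 0" "\<mu> \<noteq> 1 - g1"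
  shows "eigenvalue (C * transpose_mat C) ((\<mu> + g1 - 1) * (\<mu> + g2 - 1) / (g1 * g2 * \<mu>))"
proof -
  have Ct: "transpose_mat C \<in> carrier_mat n1 n2" using C by auto
  obtain z where z: "z \<in> carrier_vec (n1 + n2)" "z \<noteq> 0\<^sub>v (n1 + n2)"
    and Mz: "gd_iter_mat C g1 g2 *\<^sub>v z = \<mu> \<cdot>\<^sub>v z"
    using eigenvalueE[OF ev gd_iter_mat_carrier[OF C]] .
  define x where "x = vec_first z n1"
  define y where "y = vec_last z n2"
  have x: "x \<in> carrier_vec n1" and y: "y \<in> carrier_vec n2" and zxy: "z = x @\<^sub>v y"
    unfolding x_def y_def using z by auto
  define w where "w = transpose_mat C *\<^sub>v y"
  define v where "v = C *\<^sub>v x"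
  have w: "w \<in> carrier_vec n1" and v: "v \<in> carrier_vec n2"
    unfolding w_def v_def using C Ct x y by auto
  define a where "a = 1 - g1 - \<mu>"
  have "a \<noteq> 0" using \<mu>(2) unfolding a_def by auto
  from Mz have "((1 - g1) \<cdot>\<^sub>v x + (- g1) \<cdot>\<^sub>v w) @\<^sub>v
      ((- (g2 * (1 - g1))) \<cdot>\<^sub>v v + (1 - g2) \<cdot>\<^sub>v y + (g1 * g2) \<cdot>\<^sub>v (C *\<^sub>v w))
    = (\<mu> \<cdot>\<^sub>v x) @\<^sub>v (\<mu> \<cdot>\<^sub>v y)"
    unfolding zxy gd_iter_mat_mult_append[OF C x y] smult_append_vec w_def v_def .
  then have row1: "(1 - g1) \<cdot>\<^sub>v x + (- g1) \<cdot>\<^sub>v w = \<mu> \<cdot>\<^sub>v x"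
    and row2: "(- (g2 * (1 - g1))) \<cdot>\<^sub>v v + (1 - g2) \<cdot>\<^sub>v y + (g1 * g2) \<cdot>\<^sub>v (C *\<^sub>v w) = \<mu> \<cdot>\<^sub>v y"
    using x w by (simp_all add: append_vec_eq[of _ n1])
  have w_eq: "w = (a / g1) \<cdot>\<^sub>v x"
  proof (rule eq_vecI)
    fix i assume "i < dim_vec ((a / g1) \<cdot>\<^sub>v x)"
    then have "i < n1" using x by simp
    then have "(1 - g1) * x $ i - g1 * w $ i = \<mu> * x $ i"
      using arg_cong[OF row1, of "\<lambda>u. u $ i"] x w by simp
    then show "w $ i = ((a / g1) \<cdot>\<^sub>v x) $ i"
      using \<open>i < n1\<close> x g unfolding a_def by (simp add: field_simps)
  qed (use x w in simp)
  have Cw: "C *\<^sub>v w = (a / g1) \<cdot>\<^sub>v v"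
    unfolding w_eq v_def using C x by (rule mult_mat_vec)
  have y_eq: "(\<mu> + g2 - 1) * y $ i = - g2 * \<mu> * v $ i" if "i < n2" for i
  proof -
    have "(1 - g2) * y $ i + g2 * (a - (1 - g1)) * v $ i = \<mu> * y $ i"
      using arg_cong[OF row2, of "\<lambda>u. u $ i"] that v y C x g by (simp add: Cw algebra_simps)
    then show ?thesis unfolding a_def by (simp add: algebra_simps)
  qed
  have "y \<noteq> 0\<^sub>v n2"
  proof
    assume "y = 0\<^sub>v n2"
    then have "(a / g1) \<cdot>\<^sub>v x = 0\<^sub>v n1" using Ct w_eq by (simp add: w_def mult_mat_zero_vec)
    then have "x = 0\<^sub>v n1" using x g \<open>a \<noteq> 0\<close> by (simp add: smult_vec_eq_zero_iff)
    with \<open>y = 0\<^sub>v n2\<close> z zxy show False by (simp add: zero_append_zero_vec)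
  qed
  moreover have "(C * transpose_mat C) *\<^sub>v y
      = ((\<mu> + g1 - 1) * (\<mu> + g2 - 1) / (g1 * g2 * \<mu>)) \<cdot>\<^sub>v y"
  proof (rule eq_vecI)
    fix i assume "i < dim_vec (((\<mu> + g1 - 1) * (\<mu> + g2 - 1) / (g1 * g2 * \<mu>)) \<cdot>\<^sub>v y)"
    then have i: "i < n2" using y by simp
    have "((C * transpose_mat C) *\<^sub>v y) $ i = a / g1 * v $ i"
      using C Ct y i v by (simp add: assoc_mult_mat_vec[of _ n2 n1 _ n2] Cw flip: w_def)
    also have "v $ i = - (\<mu> + g2 - 1) / (g2 * \<mu>) * y $ i"
      using y_eq[OF i] g \<mu>(1) by (simp add: field_simps)
    also have "a / g1 * (- (\<mu> + g2 - 1) / (g2 * \<mu>) * y $ i)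
        = ((\<mu> + g1 - 1) * (\<mu> + g2 - 1) / (g1 * g2 * \<mu>)) * y $ i"
      unfolding a_def by (simp add: field_simps)
    finally show "((C * transpose_mat C) *\<^sub>v y) $ i = (((\<mu> + g1 - 1) * (\<mu> + g2 - 1) / (g1 * g2 * \<mu>)) \<cdot>\<^sub>v y) $ i"
      using i y by simp
  qed (use C y in simp)
  ultimately show ?thesis using C y by (intro eigenvalueI[of _ n2]) auto
qed

section \<open>The optimal stepsizes\<close>

lemma rho_gd_iter_mat_equal_steps_le:
  fixes C :: "real mat"
  assumes C: "C \<in> carrier_mat n2 n1" and n: "0 < n1 + n2" and g: "1 \<le> g"
    and bound: "\<And>t. eigenvalue (C * transpose_mat C) t \<Longrightarrow> g^2 * t \<le> 4 * (g - 1)"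
  shows "rho (gd_iter_mat C g g) \<le> g - 1"
proof (rule rho_le_of_eigenvalues_le[OF gd_iter_mat_carrier[OF C] n])
  fix \<mu> assume ev: "eigenvalue (map_mat complex_of_real (gd_iter_mat C g g)) \<mu>"
  show "cmod \<mu> \<le> g - 1"
  proof (cases "\<mu> = 0 \<or> \<mu> = 1 - of_real g")
    case True
    then show ?thesis
    proof
      assume "\<mu> = 1 - of_real g"
      then have "\<mu> = complex_of_real (1 - g)" by simp
      then have "cmod \<mu> = \<bar>1 - g\<bar>" by (simp only: norm_of_real)
      then show ?thesis using g by simp
    qed (use g in simp)
  next
    case False
    define Cc where "Cc = map_mat complex_of_real C"
    have Cc: "Cc \<in> carrier_mat n2 n1" using C unfolding Cc_def by simp
    have "g \<noteq> 0" using g by simp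
    then have "eigenvalue (Cc * transpose_mat Cc)
        ((\<mu> + of_real g - 1) * (\<mu> + of_real g - 1) / (of_real g * of_real g * \<mu>))"
      using ev False unfolding map_mat_of_real_gd_iter_mat[OF C] Cc_def[symmetric]
      by (intro gram_eigenvalue_of_gd_iter_mat_eigenvalue[OF Cc]) auto
    then obtain t where t: "(\<mu> + of_real g - 1) * (\<mu> + of_real g - 1) / (of_real g * of_real g * \<mu>)
        = complex_of_real t" and ev_t: "eigenvalue (C * transpose_mat C) t"
      using gram_complex_eigenvalue_real[OF C] unfolding map_mat_of_real_gram[OF C] Cc_def by blast
    have "of_real g * of_real g * \<mu> \<noteq> 0" using False \<open>g \<noteq> 0\<close> by simp
    then have "(\<mu> + of_real g - 1) * (\<mu> + of_real g - 1) = complex_of_real t * (of_real g * of_real g * \<mu>)"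
      using t nonzero_divide_eq_eq by blast
    then have "\<mu>^2 + complex_of_real (2 * (g - 1) - g^2 * t) * \<mu> + complex_of_real ((g - 1)^2) = 0"
      by (simp add: algebra_simps power2_eq_square)
    moreover have "(2 * (g - 1) - g^2 * t)^2 \<le> 4 * (g - 1)^2"
    proof -
      have "0 \<le> g^2 * t" using gram_eigenvalue_nonneg[OF C ev_t] by simp
      with bound[OF ev_t] g have "\<bar>2 * (g - 1) - g^2 * t\<bar> \<le> \<bar>2 * (g - 1)\<bar>" by linarith
      then have "(2 * (g - 1) - g^2 * t)^2 \<le> (2 * (g - 1))^2" by (simp only: abs_le_square_iff)
      also have "(2 * (g - 1))^2 = 4 * (g - 1)^2" by (simp only: power_mult_distrib) simp
      finally show ?thesis .
    qed
    ultimately show ?thesis using cmod_root_of_quadratic_eq[of "g - 1"] g by simp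
  qed
qed

lemma rho_gd_iter_mat_ge:
  fixes C :: "real mat"
  assumes C: "C \<in> carrier_mat n2 n1" and rank: "vec_space.rank n2 C < min n1 n2"
    and s: "eigenvalue (C * transpose_mat C) s"
    and c: "0 \<le> c" "c \<le> 1" and hs: "s * (1 + c)^2 = 4 * c"
    and g: "1 \<le> g1" "1 \<le> g2"
  shows "c \<le> rho (gd_iter_mat C g1 g2)"
proof -
  have M: "gd_iter_mat C g1 g2 \<in> carrier_mat (n1 + n2) (n1 + n2)" by (rule gd_iter_mat_carrier[OF C])
  obtain x where "x \<in> carrier_vec n1" "x \<noteq> 0\<^sub>v n1" "C *\<^sub>v x = 0\<^sub>v n2"
    using exists_kernel_vec_of_rank_lt_ncols[OF C] rank by auto
  from abs_le_rho_of_eigenvalue[OF M gd_iter_mat_eigenvalue_of_kernel[OF C this]]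
  have rho1: "g1 - 1 \<le> rho (gd_iter_mat C g1 g2)" using g by simp
  obtain y where "y \<in> carrier_vec n2" "y \<noteq> 0\<^sub>v n2" "transpose_mat C *\<^sub>v y = 0\<^sub>v n1"
    using exists_transpose_kernel_vec_of_rank_lt_nrows[OF C] rank by auto
  from abs_le_rho_of_eigenvalue[OF M gd_iter_mat_eigenvalue_of_transpose_kernel[OF C this]]
  have rho2: "g2 - 1 \<le> rho (gd_iter_mat C g1 g2)" using g by simp
  show ?thesis
  proof (cases "c \<le> g1 - 1 \<or> c \<le> g2 - 1")
    case True
    with rho1 rho2 show ?thesis by auto
  next
    case False
    then have "0 < c" using g by auto
    with hs have "s \<noteq> 0" by auto
    have "(c + g1 - 1) * (c + g2 - 1) \<le> g1 * g2 * s * c"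
      using char_relation_le_at_rate[OF c hs, of g1 g2] False g by simp
    then have "c^2 + (g1 + g2 - 2 - g1 * g2 * s) * c + (g1 - 1) * (g2 - 1) \<le> 0"
      by (simp add: power2_eq_square algebra_simps)
    then obtain \<mu> where "c \<le> \<mu>"
      and "\<mu>^2 + (g1 + g2 - 2 - g1 * g2 * s) * \<mu> + (g1 - 1) * (g2 - 1) = 0"
      by (rule quadratic_root_ge)
    then have "(\<mu> + g1 - 1) * (\<mu> + g2 - 1) = g1 * g2 * s * \<mu>"
      by (simp add: power2_eq_square algebra_simps)
    with g \<open>s \<noteq> 0\<close> have "eigenvalue (gd_iter_mat C g1 g2) \<mu>"
      by (intro gd_iter_mat_eigenvalue_of_gram_eigenvalue[OF C _ s]) auto
    from abs_le_rho_of_eigenvalue[OF M this] \<open>c \<le> \<mu>\<close> show ?thesis by linarith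
  qed
qed

theorem mainTheorem15:
  fixes A1 A2 C :: "real mat" and m n1 n2 :: nat and gs :: real
  assumes A1: "A1 \<in> carrier_mat m n1"
    and A2: "A2 \<in> carrier_mat m n2"
    and full_rank: "vec_space.rank m (four_block_mat A1 A2 (0\<^sub>m 0 n1) (0\<^sub>m 0 n2)) = n1 + n2"
    and orth1: "transpose_mat A1 * A1 = 1\<^sub>m n1"
    and orth2: "transpose_mat A2 * A2 = 1\<^sub>m n2"
    and C_def: "C = transpose_mat A2 * A1"
    and C_nz: "C \<noteq> 0\<^sub>m n2 n1"
    and rank_C: "vec_space.rank n2 C < min n1 n2"
    and gs_def: "gs = 2 / (1 + sqrt (1 - lambda_max (C * transpose_mat C)))"
  shows "rho (iterM C gs gs) = gs - 1
    \<and> (gs - 1) \<in> {rho (iterM C g1 g2) | g1 g2. g1 \<ge> 1 \<and> g2 \<ge> 1}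
    \<and> (\<forall>g1 g2. g1 \<ge> 1 \<and> g2 \<ge> 1 \<longrightarrow> gs - 1 \<le> rho (iterM C g1 g2))
    \<and> gs - 1 = (1 - sqrt (1 - lambda_max (C * transpose_mat C)))
                / (1 + sqrt (1 - lambda_max (C * transpose_mat C)))"
proof -
  define s where "s = lambda_max (C * transpose_mat C)"
  have C: "C \<in> carrier_mat n2 n1" using A1 A2 C_def by auto
  obtain t where "eigenvalue (C * transpose_mat C) t"
    using gram_has_eigenvalue[OF C] rank_C by auto
  then have s_ev: "eigenvalue (C * transpose_mat C) s"
    and s_max: "\<And>t. eigenvalue (C * transpose_mat C) t \<Longrightarrow> t \<le> s"
    using eigenvalue_lambda_max[of "C * transpose_mat C" n2] C unfolding s_def by auto
  have "0 \<le> s" "s \<le> 1"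
    using gram_eigenvalue_nonneg[OF C s_ev] gram_eigenvalue_le_one[OF A1 A2 orth1 orth2 C_def s_ev] .
  note rate_s = optimal_rate_identities[OF this]
  have gs_rate: "gs - 1 = (1 - sqrt (1 - s)) / (1 + sqrt (1 - s))"
    using rate_s(4) unfolding gs_def s_def .
  note rate = rate_s(1-3)[folded gs_rate]
  have upper: "rho (iterM C gs gs) \<le> gs - 1"
    unfolding iterM_eq_gd_iter_mat
  proof (rule rho_gd_iter_mat_equal_steps_le[OF C])
    show "0 < n1 + n2" using rank_C by simp
    show "1 \<le> gs" using rate by simp
    fix t assume "eigenvalue (C * transpose_mat C) t"
    then have "gs^2 * t \<le> gs^2 * s" by (simp add: s_max mult_left_mono)
    also have "\<dots> = 4 * (gs - 1)" using rate(3) by (simp add: algebra_simps)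
    finally show "gs^2 * t \<le> 4 * (gs - 1)" .
  qed
  have lower: "\<forall>g1 g2. g1 \<ge> 1 \<and> g2 \<ge> 1 \<longrightarrow> gs - 1 \<le> rho (iterM C g1 g2)"
    using rho_gd_iter_mat_ge[OF C rank_C s_ev] rate unfolding iterM_eq_gd_iter_mat by simp
  have "rho (iterM C gs gs) = gs - 1" using upper lower rate(1) by force
  moreover from this have "gs - 1 \<in> {rho (iterM C g1 g2) | g1 g2. g1 \<ge> 1 \<and> g2 \<ge> 1}"
    using rate(1) by force
  ultimately show ?thesis using lower gs_rate unfolding s_def by blast
qed

end
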